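(* $\mathtt{normal}$-$\mathtt{pred}$-$\mathtt{dio}$-$\mathtt{ESO}$-$\mathtt{HORN}\subseteq\mathtt{RealTime_{IA}}$: for every normalized predecessor Horn formula with diagonal input-output $\Phi$ there is an iterative array accepting in real time exactly the words $w\in\Sigma^+$ with $\langle w\rangle\models\Phi$.
   Context: Fix a finite alphabet $\Sigma$. A nonempty word $w=w_1\cdots w_n$ is represented by the structure $\langle w\rangle=([1,n];(Q_s)_{s\in\Sigma},\mathtt{min},\mathtt{max},\mathtt{suc},\mathtt{pred})$ with $Q_s(i)\iff w_i=s$, $\mathtt{min}(i)\iff i=1$, $\mathtt{max}(i)\iff i=n$, $\mathtt{suc}(i)=\min(i+1,n)$, $\mathtt{pred}(i)=\max(i-1,1)$; $x-1=\mathtt{pred}(x)$. A normalized predecessor Horn formula with diagonal input-output is $\Phi=\exists\mathbf{R}\forall x\forall y\,\psi(x,y)$, with $\mathbf{R}$ a finite set of binary relation symbols and $\psi$ a conjunction of clauses each of one of the forms: input clauses $x=y\wedge\mathtt{min}(x)\wedge Q_s(x)\to R(x,y)$ or $x=y\wedge\neg\mathtt{min}(x)\wedge Q_s(x)\to R(x,y)$ ($s\in\Sigma$, $R\in\mathbf{R}$); the contradiction clause $\mathtt{max}(x)\wedge\mathtt{max}(y)\wedge R_\bot(x,y)\to\bot$ for a fixed $R_\bot\in\mathbf{R}$; computation clauses $\delta_1\wedge\cdots\wedge\delta_r\to R(x,y)$, $R\in\mathbf{R}$, each $\delta_i$ a conjunction $S(x-1,y)\wedge\neg\mathtt{min}(x)$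 or $S(x,y-1)\wedge\neg\mathtt{min}(y)$, $S\in\mathbf{R}$. $\mathtt{normal}$-$\mathtt{pred}$-$\mathtt{dio}$-$\mathtt{ESO}$-$\mathtt{HORN}$ is the class of languages $\{w\in\Sigma^+:\langle w\rangle\models\Phi\}$ for such $\Phi$. An iterative array is a cellular automaton with finite state set $Q\supseteq\Sigma$, accepting states $Q_{accept}\subseteq Q$, neighborhood $\{-1,0,1\}$, transition function $\delta:Q^3\to Q$ and an input transition function $\delta_{input}$ for the first cell. On input $w=w_1\cdots w_n$ it uses cells $1,\dots,n$; cells outside are permanently in a state $\sharp$, cells not yet reached by information are in a quiescent state $\lambda$. The letter $w_i$ is given to cell 1 at time $i$ (state of cell 1 at time $i\le n$ computed by $\delta_{input}$ from $w_i$ and the previous neighbourhood states); other updates are $\langle c,t\rangle=\delta(\langle c-1,t-1\rangle,\langle c,t-1\rangle,\langle c+1,t-1\rangle)$. The array accepts $w$ in real time iff $\langle 1,n\rangle\in Q_{accept}$; $\mathtt{RealTime_{IA}}$ is the class of languages so accepted. *)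

theory Defs
  imports Main
begin

text \<open>Relation symbols range over a type 'r; the finite set R of symbols is the set of
symbols occurring in the (finite) clause list. Positions of a word w of length n are
1..n; Q_s(i) iff w_i = s, min(i) iff i = 1, max(i) iff i = n, pred(i) = max(i-1,1).\<close>

datatype 'r hyp =
    HypX 'r
  | HypY 'r

datatype ('a, 'r) clause =
    InputMin 'a 'r
  | InputNotMin 'a 'r
  | Contra
  | Comp "'r hyp list" 'r

datatype ('a, 'r) formula =
  Formula (clauses: "('a, 'r) clause list") (rbot: 'r)

definition predp :: "nat \<Rightarrow> nat" where
  "predp i = max (i - 1) 1"

fun hyp_holds :: "('r \<Rightarrow> nat \<Rightarrow> nat \<Rightarrow> bool) \<Rightarrow> nat \<Rightarrow> nat \<Rightarrow> 'r hyp \<Rightarrow> bool" where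
  "hyp_holds I x y (HypX S) = (I S (predp x) y \<and> x \<noteq> 1)"
| "hyp_holds I x y (HypY S) = (I S x (predp y) \<and> y \<noteq> 1)"

fun clause_holds :: "'a list \<Rightarrow> 'r \<Rightarrow> ('r \<Rightarrow> nat \<Rightarrow> nat \<Rightarrow> bool) \<Rightarrow> nat \<Rightarrow> nat
    \<Rightarrow> ('a, 'r) clause \<Rightarrow> bool" where
  "clause_holds w rb I x y (InputMin s R) =
     (x = y \<and> x = 1 \<and> w ! (x - 1) = s \<longrightarrow> I R x y)"
| "clause_holds w rb I x y (InputNotMin s R) =
     (x = y \<and> x \<noteq> 1 \<and> w ! (x - 1) = s \<longrightarrow> I R x y)"
| "clause_holds w rb I x y Contra =
     (\<not> (x = length w \<and> y = length w \<and> I rb x y))"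
| "clause_holds w rb I x y (Comp hs R) =
     ((\<forall>h\<in>set hs. hyp_holds I x y h) \<longrightarrow> I R x y)"

definition models :: "'a list \<Rightarrow> ('a, 'r) formula \<Rightarrow> bool" where
  "models w \<Phi> \<longleftrightarrow> (\<exists>I :: 'r \<Rightarrow> nat \<Rightarrow> nat \<Rightarrow> bool.
     \<forall>x\<in>{1..length w}. \<forall>y\<in>{1..length w}. \<forall>c\<in>set (clauses \<Phi>).
        clause_holds w (rbot \<Phi>) I x y c)"

datatype 'a ia = IA
  (ia_delta: "nat \<Rightarrow> nat \<Rightarrow> nat \<Rightarrow> nat")
  (ia_input: "'a \<Rightarrow> nat \<Rightarrow> nat \<Rightarrow> nat \<Rightarrow> nat")
  (ia_quiescent: nat)
  (ia_border: nat)
  (ia_accept: "nat set")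

definition ia_wf :: "'a ia \<Rightarrow> nat set \<Rightarrow> bool" where
  "ia_wf A Q \<longleftrightarrow> finite Q \<and> ia_quiescent A \<in> Q \<and> ia_border A \<in> Q
     \<and> ia_quiescent A \<noteq> ia_border A \<and> ia_accept A \<subseteq> Q
     \<and> (\<forall>p\<in>Q. \<forall>q\<in>Q. \<forall>r\<in>Q. ia_delta A p q r \<in> Q)
     \<and> (\<forall>a p q r. p \<in> Q \<longrightarrow> q \<in> Q \<longrightarrow> r \<in> Q \<longrightarrow> ia_input A a p q r \<in> Q)
     \<and> ia_delta A (ia_quiescent A) (ia_quiescent A) (ia_quiescent A) = ia_quiescent A"

fun conf :: "'a ia \<Rightarrow> 'a list \<Rightarrow> nat \<Rightarrow> nat \<Rightarrow> nat" where
  "conf A w 0 c = (if 1 \<le> c \<and> c \<le> length w then ia_quiescent A else ia_border A)"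
| "conf A w (Suc t) c =
     (if \<not> (1 \<le> c \<and> c \<le> length w) then ia_border A
      else if c = 1 \<and> Suc t \<le> length w then
        ia_input A (w ! t) (conf A w t 0) (conf A w t 1) (conf A w t 2)
      else ia_delta A (conf A w t (c - 1)) (conf A w t c) (conf A w t (c + 1)))"

definition ia_accepts_rt :: "'a ia \<Rightarrow> 'a list \<Rightarrow> bool" where
  "ia_accepts_rt A w \<longleftrightarrow> conf A w (length w) 1 \<in> ia_accept A"

end

(* A normalized Horn formula has a least model, computed by a dynamic program on the n x n grid
   of positions: the set of relation symbols forced at (x, y) depends only on the sets forced at
   (x - 1, y) and (x, y - 1) and, on the diagonal, on the letter w_x. So the formula holds iff R_bot
   is not forced at (n, n), or there is no contradiction clause at all.
   An iterative array evaluates the grid along anti-diagonals: at time t, cell c holds the 2 x 2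
   block of the grid with corner (t - c, t + c - 2) together with its mirror image in the diagonal.
   Each block is recomputed from the blocks of the two neighbouring cells one step earlier, and
   cell 1 computes the diagonal entry (t, t) exactly when it receives w_t. Hence at time n cell 1
   knows whether R_bot is forced at (n, n). *)

theory Submission
  imports Defs "HOL-Library.Countable_Set"
begin

fun hyp_enabled :: "'r set option \<Rightarrow> 'r set option \<Rightarrow> 'r hyp \<Rightarrow> bool" where
  "hyp_enabled xprev yprev (HypX S) = (case xprev of None \<Rightarrow> False | Some A \<Rightarrow> S \<in> A)"
| "hyp_enabled xprev yprev (HypY S) = (case yprev of None \<Rightarrow> False | Some B \<Rightarrow> S \<in> B)"

definition fire :: "('a, 'r) formula \<Rightarrow> bool \<Rightarrow> 'a option \<Rightarrow> 'r set option \<Rightarrow> 'r set option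
    \<Rightarrow> 'r set" where
  "fire \<Phi> first letter xprev yprev = {R.
       (\<exists>s. letter = Some s \<and> first \<and> InputMin s R \<in> set (clauses \<Phi>))
     \<or> (\<exists>s. letter = Some s \<and> \<not> first \<and> InputNotMin s R \<in> set (clauses \<Phi>))
     \<or> (\<exists>hs. Comp hs R \<in> set (clauses \<Phi>) \<and> (\<forall>h\<in>set hs. hyp_enabled xprev yprev h))}"

text \<open>\<open>forced w \<Phi> x y\<close> is the set of relation symbols holding at (x, y) in the least model,
  in 1-based coordinates; \<open>None\<close> marks the positions with a coordinate 0, outside the grid.\<close>

fun forced :: "'a list \<Rightarrow> ('a, 'r) formula \<Rightarrow> nat \<Rightarrow> nat \<Rightarrow> 'r set option" where
  "forced w \<Phi> 0 y = None"
| "forced w \<Phi> (Suc x) 0 = None"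
| "forced w \<Phi> (Suc x) (Suc y) = Some (fire \<Phi> (x = 0) (if x = y then Some (w ! x) else None)
      (forced w \<Phi> x (Suc y)) (forced w \<Phi> (Suc x) y))"

definition forced_model :: "'a list \<Rightarrow> ('a, 'r) formula \<Rightarrow> 'r \<Rightarrow> nat \<Rightarrow> nat \<Rightarrow> bool" where
  "forced_model w \<Phi> R x y \<longleftrightarrow> (\<exists>S. forced w \<Phi> x y = Some S \<and> R \<in> S)"

lemma forced_model_satisfies_clauses:
  assumes "c \<in> set (clauses \<Phi>)" "c \<noteq> Contra" "1 \<le> x" "1 \<le> y"
  shows "clause_holds w (rbot \<Phi>) (forced_model w \<Phi>) x y c"
proof -
  obtain x' y' where xy: "x = Suc x'" "y = Suc y'"
    using assms(3,4) by (cases x; cases y) auto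
  show ?thesis
  proof (cases c)
    case (Comp hs R)
    have "hyp_enabled (forced w \<Phi> x' (Suc y')) (forced w \<Phi> (Suc x') y') h"
      if "hyp_holds (forced_model w \<Phi>) x y h" for h
      using that xy by (cases h) (auto simp: forced_model_def predp_def)
    then show ?thesis
      using assms(1) Comp xy by (auto simp: forced_model_def fire_def)
  qed (use assms xy in \<open>auto simp: forced_model_def fire_def\<close>)
qed

lemma forced_in_model:
  assumes I: "\<forall>x\<in>{1..length w}. \<forall>y\<in>{1..length w}. \<forall>c\<in>set (clauses \<Phi>).
                clause_holds w (rbot \<Phi>) I x y c"
    and "x \<le> length w" "y \<le> length w" "forced_model w \<Phi> R x y"
  shows "I R x y"
  using assms(2-)
proof (induction "x + y" arbitrary: x y R rule: less_induct)
  case less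
  obtain x' y' S where xy: "x = Suc x'" "y = Suc y'" and S: "forced w \<Phi> x y = Some S" "R \<in> S"
    using less.prems(3) by (cases x; cases y) (auto simp: forced_model_def)
  have clause: "clause_holds w (rbot \<Phi>) I x y c" if "c \<in> set (clauses \<Phi>)" for c
    using I that less.prems xy by auto
  have hyps: "hyp_holds I x y h"
    if "hyp_enabled (forced w \<Phi> x' (Suc y')) (forced w \<Phi> (Suc x') y') h" for h
  proof (cases h)
    case (HypX S')
    with that have "x' \<noteq> 0" "forced_model w \<Phi> S' x' y"
      by (cases x'; auto simp: forced_model_def xy split: option.splits)+
    with less HypX xy show ?thesis by (auto simp: predp_def)
  next
    case (HypY S')
    with that have "y' \<noteq> 0" "forced_model w \<Phi> S' x y'"
      by (cases y'; auto simp: forced_model_def xy split: option.splits)+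
    with less HypY xy show ?thesis by (auto simp: predp_def)
  qed
  have "R \<in> fire \<Phi> (x' = 0) (if x' = y' then Some (w ! x') else None)
      (forced w \<Phi> x' (Suc y')) (forced w \<Phi> (Suc x') y')"
    using S xy by simp
  then consider
      "x' = y'" "x' = 0" "InputMin (w ! x') R \<in> set (clauses \<Phi>)"
    | "x' = y'" "x' \<noteq> 0" "InputNotMin (w ! x') R \<in> set (clauses \<Phi>)"
    | hs where "Comp hs R \<in> set (clauses \<Phi>)"
        "\<forall>h\<in>set hs. hyp_enabled (forced w \<Phi> x' (Suc y')) (forced w \<Phi> (Suc x') y') h"
    unfolding fire_def by (auto split: if_splits)
  then show ?case
    by cases (use clause hyps xy in fastforce)+
qed

theorem models_iff_forced:
  assumes "w \<noteq> []"
  shows "models w \<Phi> \<longleftrightarrow>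
    Contra \<notin> set (clauses \<Phi>) \<or> \<not> forced_model w \<Phi> (rbot \<Phi>) (length w) (length w)"
proof
  assume "models w \<Phi>"
  then obtain I where I: "\<forall>x\<in>{1..length w}. \<forall>y\<in>{1..length w}. \<forall>c\<in>set (clauses \<Phi>).
      clause_holds w (rbot \<Phi>) I x y c" unfolding models_def by blast
  have "length w \<in> {1..length w}" using assms by (cases w) auto
  with I forced_in_model[OF I order.refl order.refl]
  show "Contra \<notin> set (clauses \<Phi>) \<or> \<not> forced_model w \<Phi> (rbot \<Phi>) (length w) (length w)"
    by fastforce
next
  assume "Contra \<notin> set (clauses \<Phi>) \<or> \<not> forced_model w \<Phi> (rbot \<Phi>) (length w) (length w)"
  then consider "Contra \<notin> set (clauses \<Phi>)"
    | "\<not> forced_model w \<Phi> (rbot \<Phi>) (length w) (length w)" by blast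
  then show "models w \<Phi>"
  proof cases
    case 1
    have "clause_holds w (rbot \<Phi>) (\<lambda>_ _ _. True) x y c" if "c \<in> set (clauses \<Phi>)" for x y c
      using 1 that by (cases c) auto
    then show ?thesis unfolding models_def by blast
  next
    case 2
    have "clause_holds w (rbot \<Phi>) (forced_model w \<Phi>) x y c"
      if "x \<in> {1..length w}" "y \<in> {1..length w}" "c \<in> set (clauses \<Phi>)" for x y c
      using that 2 forced_model_satisfies_clauses[of c \<Phi> x y w] by (cases "c = Contra") auto
    then show ?thesis unfolding models_def by blast
  qed
qed

definition ia_of :: "'s set \<Rightarrow> ('s \<Rightarrow> 's \<Rightarrow> 's \<Rightarrow> 's) \<Rightarrow> ('a \<Rightarrow> 's \<Rightarrow> 's \<Rightarrow> 's \<Rightarrow> 's)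
    \<Rightarrow> 's \<Rightarrow> 's \<Rightarrow> ('s \<Rightarrow> bool) \<Rightarrow> 'a ia" where
  "ia_of S \<delta> \<iota> q b F = IA
     (\<lambda>p q r. to_nat_on S (\<delta> (from_nat_into S p) (from_nat_into S q) (from_nat_into S r)))
     (\<lambda>a p q r. to_nat_on S (\<iota> a (from_nat_into S p) (from_nat_into S q) (from_nat_into S r)))
     (to_nat_on S q) (to_nat_on S b) (to_nat_on S ` {s \<in> S. F s})"

lemma ia_of_sel [simp]:
  "ia_delta (ia_of S \<delta> \<iota> q b F) p q' r =
     to_nat_on S (\<delta> (from_nat_into S p) (from_nat_into S q') (from_nat_into S r))"
  "ia_input (ia_of S \<delta> \<iota> q b F) a p q' r =
     to_nat_on S (\<iota> a (from_nat_into S p) (from_nat_into S q') (from_nat_into S r))"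
  "ia_quiescent (ia_of S \<delta> \<iota> q b F) = to_nat_on S q"
  "ia_border (ia_of S \<delta> \<iota> q b F) = to_nat_on S b"
  "ia_accept (ia_of S \<delta> \<iota> q b F) = to_nat_on S ` {s \<in> S. F s}"
  by (simp_all add: ia_of_def)

lemma ia_of_wf:
  assumes S: "finite S" and q: "q \<in> S" and b: "b \<in> S" "b \<noteq> q"
    and \<delta>: "\<And>p q r. p \<in> S \<Longrightarrow> q \<in> S \<Longrightarrow> r \<in> S \<Longrightarrow> \<delta> p q r \<in> S"
    and \<iota>: "\<And>a p q r. p \<in> S \<Longrightarrow> q \<in> S \<Longrightarrow> r \<in> S \<Longrightarrow> \<iota> a p q r \<in> S"
    and quiescent: "\<delta> q q q = q"
  shows "ia_wf (ia_of S \<delta> \<iota> q b F) (to_nat_on S ` S)"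
proof -
  have dec: "from_nat_into S n \<in> S" for n
    using q by (auto intro: from_nat_into)
  have "to_nat_on S q \<noteq> to_nat_on S b"
    using b q S by (simp add: countable_finite)
  then show ?thesis
    using assms dec by (auto simp: ia_wf_def countable_finite)
qed

lemma conf_ia_of:
  assumes S: "countable S" and range: "\<And>t c. \<sigma> t c \<in> S"
    and outside: "\<And>t c. c \<notin> {1..length w} \<Longrightarrow> \<sigma> t c = b"
    and init: "\<And>c. c \<in> {1..length w} \<Longrightarrow> \<sigma> 0 c = q"
    and input: "\<And>t. t < length w \<Longrightarrow> \<sigma> (Suc t) 1 = \<iota> (w ! t) (\<sigma> t 0) (\<sigma> t 1) (\<sigma> t 2)"
    and step: "\<And>t c. t < length w \<Longrightarrow> 2 \<le> c \<Longrightarrow> c \<le> length w \<Longrightarrow>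
                 \<sigma> (Suc t) c = \<delta> (\<sigma> t (c - 1)) (\<sigma> t c) (\<sigma> t (c + 1))"
    and "t \<le> length w"
  shows "conf (ia_of S \<delta> \<iota> q b F) w t c = to_nat_on S (\<sigma> t c)"
  using \<open>t \<le> length w\<close>
proof (induction t arbitrary: c)
  case 0
  show ?case using outside init by simp
next
  case (Suc t)
  then have dec: "from_nat_into S (conf (ia_of S \<delta> \<iota> q b F) w t c') = \<sigma> t c'" for c'
    using S range by simp
  have "c = 1 \<or> c \<notin> {1..length w} \<or> 2 \<le> c \<and> c \<le> length w" by auto
  then show ?case
    using Suc.prems outside input step by (auto simp: dec)
qed

lemma ia_accepts_rt_ia_of:
  assumes "countable S" "s \<in> S" "conf (ia_of S \<delta> \<iota> q b F) w (length w) 1 = to_nat_on S s"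
  shows "ia_accepts_rt (ia_of S \<delta> \<iota> q b F) w \<longleftrightarrow> F s"
  using assms by (auto simp: ia_accepts_rt_def)

definition fire_off :: "('a, 'r) formula \<Rightarrow> 'r set option \<Rightarrow> 'r set option \<Rightarrow> 'r set option" where
  "fire_off \<Phi> xprev yprev = Some (fire \<Phi> False None xprev yprev)"

lemma forced_off_diagonal:
  "0 < x \<Longrightarrow> 0 < y \<Longrightarrow> x \<noteq> y \<Longrightarrow>
   forced w \<Phi> x y = fire_off \<Phi> (forced w \<Phi> (x - 1) y) (forced w \<Phi> x (y - 1))"
  by (cases x; cases y) (auto simp: fire_off_def fire_def)

lemma forced_0_right [simp]: "forced w \<Phi> x 0 = None"
  by (cases x) auto

declare forced.simps(3) [simp del]

datatype 'r cell = Quiet | Edge | Window "bool \<times> bool \<times> bool \<Rightarrow> 'r set option"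

fun window_val :: "'r cell \<Rightarrow> bool \<times> bool \<times> bool \<Rightarrow> 'r set option" where
  "window_val (Window f) k = f k"
| "window_val _ k = None"

text \<open>Recomputes the block with corner (A, B) from the entries (A - 1, B), (A - 1, B + 1) held by
  the right neighbour and (A, B - 1), (A + 1, B - 1) held by the left neighbour; \<open>front\<close> means
  A = 0, so that row A is outside the grid.\<close>

definition block_update :: "('v option \<Rightarrow> 'v option \<Rightarrow> 'v option) \<Rightarrow> 'v option \<Rightarrow> 'v option
    \<Rightarrow> 'v option \<Rightarrow> 'v option \<Rightarrow> bool \<Rightarrow> bool \<Rightarrow> bool \<Rightarrow> 'v option" where
  "block_update G l01 l11 r10 r11 front i j =
    (let u00 = (if front then None else G r10 l01);
         u01 = (if front then None else G r11 u00);
         u10 = G u00 l11;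
         u11 = G u01 u10
     in if i then (if j then u11 else u10) else (if j then u01 else u00))"

text \<open>In the mirrored half of a window the roles of x and y are exchanged.\<close>

definition window_update :: "('a, 'r) formula \<Rightarrow> 'r cell \<Rightarrow> 'r cell \<Rightarrow> bool
    \<Rightarrow> bool \<times> bool \<times> bool \<Rightarrow> 'r set option" where
  "window_update \<Phi> L R front = (\<lambda>(mirror, i, j).
     block_update (if mirror then (\<lambda>a b. fire_off \<Phi> b a) else fire_off \<Phi>)
       (window_val L (mirror, False, True)) (window_val L (mirror, True, True))
       (window_val R (mirror, True, False)) (window_val R (mirror, True, True)) front i j)"

definition cell_delta :: "('a, 'r) formula \<Rightarrow> 'r cell \<Rightarrow> 'r cell \<Rightarrow> 'r cell \<Rightarrow> 'r cell" where
  "cell_delta \<Phi> L M R =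
     (if M = Quiet then (if L = Quiet then Quiet else Window (window_update \<Phi> L R True))
      else Window (window_update \<Phi> L R False))"

text \<open>At time t cell 1 holds the diagonal block with corner (t - 1, t - 1); its entry (t, t) is the only
  one that reads an input letter.\<close>

definition corner_update :: "('a, 'r) formula \<Rightarrow> 'a \<Rightarrow> 'r cell \<Rightarrow> 'r cell \<Rightarrow> bool \<Rightarrow> bool
    \<Rightarrow> 'r set option" where
  "corner_update \<Phi> a M R i j =
    (let first = (M = Quiet);
         u00 = window_val M (False, True, True);
         u01 = (if first then None else fire_off \<Phi> (window_val R (False, True, True)) u00);
         u10 = (if first then None else fire_off \<Phi> u00 (window_val R (True, True, True)))
     in if i then (if j then Some (fire \<Phi> first (Some a) u01 u10) else u10)
        else (if j then u01 else u00))"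

definition cell_input :: "('a, 'r) formula \<Rightarrow> 'a \<Rightarrow> 'r cell \<Rightarrow> 'r cell \<Rightarrow> 'r cell \<Rightarrow> 'r cell" where
  "cell_input \<Phi> a L M R =
     Window (\<lambda>(mirror, i, j). if mirror then corner_update \<Phi> a M R j i else corner_update \<Phi> a M R i j)"

definition window :: "'a list \<Rightarrow> ('a, 'r) formula \<Rightarrow> nat \<Rightarrow> nat \<Rightarrow> bool \<times> bool \<times> bool
    \<Rightarrow> 'r set option" where
  "window w \<Phi> A B = (\<lambda>(mirror, i, j).
     if mirror then forced w \<Phi> (B + of_bool j) (A + of_bool i)
     else forced w \<Phi> (A + of_bool i) (B + of_bool j))"

text \<open>Cell c is activated at time c; at time t the blocks of the active cells overlap along the
  anti-diagonal through (t - 1, t - 1).\<close>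

definition cell_spec :: "'a list \<Rightarrow> ('a, 'r) formula \<Rightarrow> nat \<Rightarrow> nat \<Rightarrow> 'r cell" where
  "cell_spec w \<Phi> t c =
     (if c \<notin> {1..length w} then Edge
      else if t < c then Quiet
      else Window (window w \<Phi> (t - c) (t + c - 2)))"

lemma cell_delta_interior:
  assumes A: "1 \<le> A" and B: "A + 2 \<le> B" and M: "M \<noteq> Quiet"
    and L: "L = Window (window w \<Phi> A (B - 2))"
    and R: "R = (if 2 \<le> A then Window (window w \<Phi> (A - 2) B) else Quiet)"
  shows "cell_delta \<Phi> L M R = Window (window w \<Phi> A B)"
proof -
  have upper: "forced w \<Phi> (A + of_bool i) (B + of_bool j) = fire_off \<Phi>
      (forced w \<Phi> (A + of_bool i - 1) (B + of_bool j))
      (forced w \<Phi> (A + of_bool i) (B + of_bool j - 1))"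
    and lower: "forced w \<Phi> (B + of_bool j) (A + of_bool i) = fire_off \<Phi>
      (forced w \<Phi> (B + of_bool j - 1) (A + of_bool i))
      (forced w \<Phi> (B + of_bool j) (A + of_bool i - 1))"
    for i j using A B by (intro forced_off_diagonal; simp)+
  have R_val: "window_val R (mirror, True, j) =
      (if mirror then forced w \<Phi> (B + of_bool j) (A - 1) else forced w \<Phi> (A - 1) (B + of_bool j))" for mirror j
    using A by (cases "2 \<le> A") (auto simp: R window_def numeral_2_eq_2 Suc_diff_Suc)
  have L_val: "window_val L (mirror, i, True) =
      (if mirror then forced w \<Phi> (B - 1) (A + of_bool i) else forced w \<Phi> (A + of_bool i) (B - 1))" for mirror i
    using B by (auto simp: L window_def Suc_diff_Suc numeral_2_eq_2)
  have "window_update \<Phi> L R False = window w \<Phi> A B"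
  proof (rule ext, clarify)
    fix mirror i j
    show "window_update \<Phi> L R False (mirror, i, j) = window w \<Phi> A B (mirror, i, j)"
      unfolding window_update_def R_val L_val
      using upper[of False False] upper[of False True] upper[of True False] upper[of True True]
        lower[of False False] lower[of False True] lower[of True False] lower[of True True] A
      by (cases mirror; cases i; cases j) (simp_all add: block_update_def window_def Let_def)
  qed
  then show ?thesis using M by (simp add: cell_delta_def)
qed

lemma cell_delta_front:
  assumes B: "2 \<le> B" and L: "L = Window (window w \<Phi> 0 (B - 2))"
  shows "cell_delta \<Phi> L Quiet R = Window (window w \<Phi> 0 B)"
proof -
  have upper: "forced w \<Phi> 1 (B + of_bool j) = fire_off \<Phi> None (forced w \<Phi> 1 (B + of_bool j - 1))"
    and lower: "forced w \<Phi> (B + of_bool j) 1 = fire_off \<Phi> (forced w \<Phi> (B + of_bool j - 1) 1) None"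
    for j using B forced_off_diagonal[of 1 "B + of_bool j" w \<Phi>]
      forced_off_diagonal[of "B + of_bool j" 1 w \<Phi>] by simp_all
  have L_val: "window_val L (mirror, True, True) =
      (if mirror then forced w \<Phi> (B - 1) 1 else forced w \<Phi> 1 (B - 1))" for mirror
    using B by (auto simp: L window_def Suc_diff_Suc numeral_2_eq_2)
  have "window_update \<Phi> L R True = window w \<Phi> 0 B"
  proof (rule ext, clarify)
    fix mirror i j
    show "window_update \<Phi> L R True (mirror, i, j) = window w \<Phi> 0 B (mirror, i, j)"
      unfolding window_update_def L_val
      using upper[of False] upper[of True] lower[of False] lower[of True]
      by (cases mirror; cases i; cases j) (simp_all add: block_update_def window_def Let_def)
  qed
  then show ?thesis using L by (simp add: cell_delta_def)
qed

lemma cell_input_diagonal: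
  assumes t: "t < length w"
  shows "cell_input \<Phi> (w ! t) L (cell_spec w \<Phi> t 1) (cell_spec w \<Phi> t 2) =
    Window (window w \<Phi> t t)"
proof (cases t)
  case 0
  have "corner_update \<Phi> (w ! 0) Quiet R i j = forced w \<Phi> (of_bool i) (of_bool j)" for R i j
    by (cases i; cases j) (simp_all add: corner_update_def forced.simps(3))
  moreover have "cell_spec w \<Phi> 0 1 = Quiet"
    using t by (simp add: cell_spec_def)
  ultimately show ?thesis using 0
    by (auto simp: cell_input_def window_def)
next
  case (Suc t')
  have M: "cell_spec w \<Phi> t 1 = Window (window w \<Phi> t' t')"
    using Suc t by (simp add: cell_spec_def)
  let ?R = "cell_spec w \<Phi> t 2"
  have R_val: "window_val ?R (False, True, True) = forced w \<Phi> t' (Suc t)"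
    "window_val ?R (True, True, True) = forced w \<Phi> (Suc t) t'"
    using Suc t by (cases t'; auto simp: cell_spec_def window_def numeral_2_eq_2)+
  have above: "forced w \<Phi> t (Suc t) = fire_off \<Phi> (forced w \<Phi> t' (Suc t)) (forced w \<Phi> t t)"
    and below: "forced w \<Phi> (Suc t) t = fire_off \<Phi> (forced w \<Phi> t t) (forced w \<Phi> (Suc t) t')"
    using Suc forced_off_diagonal[of t "Suc t"] forced_off_diagonal[of "Suc t" t] by auto
  have diag: "forced w \<Phi> (Suc t) (Suc t) =
      Some (fire \<Phi> False (Some (w ! t)) (forced w \<Phi> t (Suc t)) (forced w \<Phi> (Suc t) t))"
    using Suc by (simp add: forced.simps(3))
  have M_val: "window w \<Phi> t' t' (False, True, True) = forced w \<Phi> t t"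
    using Suc by (simp add: window_def)
  have "corner_update \<Phi> (w ! t) (Window (window w \<Phi> t' t')) ?R i j =
      forced w \<Phi> (t + of_bool i) (t + of_bool j)" for i j
    by (cases i; cases j) (simp_all add: corner_update_def M_val R_val above below diag Let_def)
  then show ?thesis unfolding M
    by (auto simp: cell_input_def window_def)
qed

lemma cell_spec_input:
  "t < length w \<Longrightarrow> cell_spec w \<Phi> (Suc t) 1 =
     cell_input \<Phi> (w ! t) (cell_spec w \<Phi> t 0) (cell_spec w \<Phi> t 1) (cell_spec w \<Phi> t 2)"
  using cell_input_diagonal[of t w \<Phi>] by (simp add: cell_spec_def)

lemma cell_spec_step:
  assumes t: "t < length w" and c: "2 \<le> c" "c \<le> length w"
  shows "cell_spec w \<Phi> (Suc t) c =
    cell_delta \<Phi> (cell_spec w \<Phi> t (c - 1)) (cell_spec w \<Phi> t c) (cell_spec w \<Phi> t (c + 1))"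
proof -
  consider (quiet) "Suc t < c" | (front) "c = Suc t" | (interior) "c \<le> t" by linarith
  then show ?thesis
  proof cases
    case quiet
    then have "cell_spec w \<Phi> t (c - 1) = Quiet" "cell_spec w \<Phi> t c = Quiet"
      "cell_spec w \<Phi> (Suc t) c = Quiet"
      using c by (auto simp: cell_spec_def)
    then show ?thesis by (simp add: cell_delta_def)
  next
    case front
    have "cell_spec w \<Phi> t (c - 1) = Window (window w \<Phi> 0 (t + t - 2))"
      using front c by (simp add: cell_spec_def)
    then have "cell_delta \<Phi> (cell_spec w \<Phi> t (c - 1)) Quiet (cell_spec w \<Phi> t (c + 1)) =
        Window (window w \<Phi> 0 (t + t))"
      using front c by (intro cell_delta_front) auto
    moreover have "cell_spec w \<Phi> t c = Quiet"
      "cell_spec w \<Phi> (Suc t) c = Window (window w \<Phi> 0 (t + t))"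
      using front c by (simp_all add: cell_spec_def)
    ultimately show ?thesis by simp
  next
    case interior
    define A where "A = Suc t - c"
    define B where "B = Suc t + c - 2"
    have "cell_delta \<Phi> (cell_spec w \<Phi> t (c - 1)) (cell_spec w \<Phi> t c) (cell_spec w \<Phi> t (c + 1)) =
        Window (window w \<Phi> A B)"
    proof (rule cell_delta_interior)
      have "t - (c - 1) = A" "t + (c - 1) - 2 = B - 2"
        using interior c by (simp_all add: A_def B_def)
      then show "cell_spec w \<Phi> t (c - 1) = Window (window w \<Phi> A (B - 2))"
        using interior c t by (auto simp: cell_spec_def)
      show "cell_spec w \<Phi> t (c + 1) = (if 2 \<le> A then Window (window w \<Phi> (A - 2) B) else Quiet)"
        using interior c t by (auto simp: cell_spec_def A_def B_def)
    qed (use interior c t in \<open>auto simp: cell_spec_def A_def B_def\<close>)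
    then show ?thesis
      using interior c t by (simp add: cell_spec_def A_def B_def)
  qed
qed

fun clause_head :: "('a, 'r) clause \<Rightarrow> 'r set" where
  "clause_head (InputMin s R) = {R}"
| "clause_head (InputNotMin s R) = {R}"
| "clause_head Contra = {}"
| "clause_head (Comp hs R) = {R}"

definition cell_values :: "('a, 'r) formula \<Rightarrow> 'r set option set" where
  "cell_values \<Phi> = insert None (Some ` Pow (\<Union> (clause_head ` set (clauses \<Phi>))))"

definition cell_states :: "('a, 'r) formula \<Rightarrow> 'r cell set" where
  "cell_states \<Phi> = {Quiet, Edge} \<union> Window ` {f. \<forall>k. f k \<in> cell_values \<Phi>}"

lemma finite_clause_head [simp]: "finite (clause_head c)"
  by (cases c) auto

lemma finite_cell_states: "finite (cell_states \<Phi>)"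
proof -
  have "finite (cell_values \<Phi>)"
    by (simp add: cell_values_def)
  then have "finite {f. \<forall>k :: bool \<times> bool \<times> bool.
      (k \<in> UNIV \<longrightarrow> f k \<in> cell_values \<Phi>) \<and> (k \<notin> UNIV \<longrightarrow> f k = None)}"
    by (intro finite_set_of_finite_funs) simp_all
  then show ?thesis by (simp add: cell_states_def)
qed

lemma None_in_cell_values [simp]: "None \<in> cell_values \<Phi>"
  by (simp add: cell_values_def)

lemma fire_subset_clause_heads:
  "fire \<Phi> first letter xprev yprev \<subseteq> \<Union> (clause_head ` set (clauses \<Phi>))"
proof
  fix R
  assume "R \<in> fire \<Phi> first letter xprev yprev"
  then consider s where "InputMin s R \<in> set (clauses \<Phi>)"
    | s where "InputNotMin s R \<in> set (clauses \<Phi>)"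
    | hs where "Comp hs R \<in> set (clauses \<Phi>)"
    unfolding fire_def by blast
  then show "R \<in> \<Union> (clause_head ` set (clauses \<Phi>))"
    by cases force+
qed

lemma Some_fire_in_cell_values [simp]: "Some (fire \<Phi> first letter xprev yprev) \<in> cell_values \<Phi>"
  unfolding cell_values_def by (intro insertI2 imageI PowI fire_subset_clause_heads)

lemma fire_off_in_cell_values [simp]: "fire_off \<Phi> xprev yprev \<in> cell_values \<Phi>"
  by (simp add: fire_off_def)

lemma window_val_in_cell_values: "M \<in> cell_states \<Phi> \<Longrightarrow> window_val M k \<in> cell_values \<Phi>"
  unfolding cell_states_def by (cases M; cases k) auto

lemma Window_in_cell_states: "(\<And>k. f k \<in> cell_values \<Phi>) \<Longrightarrow> Window f \<in> cell_states \<Phi>"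
  by (simp add: cell_states_def)

lemma cell_delta_in_cell_states: "cell_delta \<Phi> L M R \<in> cell_states \<Phi>"
proof -
  have "window_update \<Phi> L R front k \<in> cell_values \<Phi>" for front k
    by (cases k) (simp add: window_update_def block_update_def Let_def)
  then show ?thesis
    by (simp add: cell_delta_def cell_states_def)
qed

lemma cell_input_in_cell_states:
  assumes "M \<in> cell_states \<Phi>"
  shows "cell_input \<Phi> a L M R \<in> cell_states \<Phi>"
proof -
  have "corner_update \<Phi> a M R i j \<in> cell_values \<Phi>" for i j
    using window_val_in_cell_values[OF assms] by (simp add: corner_update_def Let_def)
  then show ?thesis
    unfolding cell_input_def by (intro Window_in_cell_states) (simp split: prod.split)
qed

lemma forced_in_cell_values: "forced w \<Phi> x y \<in> cell_values \<Phi>"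
  by (cases x; cases y) (simp_all add: forced.simps(3))

lemma cell_spec_in_cell_states: "cell_spec w \<Phi> t c \<in> cell_states \<Phi>"
  by (auto simp: cell_spec_def cell_states_def window_def forced_in_cell_values)

text \<open>Entry (False, True, True) of the window of cell 1 at time n is position (n, n).\<close>

definition accepting :: "('a, 'r) formula \<Rightarrow> 'r cell \<Rightarrow> bool" where
  "accepting \<Phi> M \<longleftrightarrow> Contra \<notin> set (clauses \<Phi>) \<or>
     (\<forall>S. window_val M (False, True, True) = Some S \<longrightarrow> rbot \<Phi> \<notin> S)"

definition horn_ia :: "('a, 'r) formula \<Rightarrow> 'a ia" where
  "horn_ia \<Phi> = ia_of (cell_states \<Phi>) (cell_delta \<Phi>) (cell_input \<Phi>) Quiet Edge (accepting \<Phi>)"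

lemma horn_ia_wf: "ia_wf (horn_ia \<Phi>) (to_nat_on (cell_states \<Phi>) ` cell_states \<Phi>)"
proof -
  have "Quiet \<in> cell_states \<Phi>" "Edge \<in> cell_states \<Phi>"
    by (simp_all add: cell_states_def)
  moreover have "cell_delta \<Phi> Quiet Quiet Quiet = Quiet"
    by (simp add: cell_delta_def)
  ultimately show ?thesis
    unfolding horn_ia_def
    by (intro ia_of_wf finite_cell_states cell_delta_in_cell_states cell_input_in_cell_states) simp_all
qed

lemma conf_horn_ia:
  assumes "t \<le> length w"
  shows "conf (horn_ia \<Phi>) w t c = to_nat_on (cell_states \<Phi>) (cell_spec w \<Phi> t c)"
  unfolding horn_ia_def
proof (rule conf_ia_of)
  show "countable (cell_states \<Phi>)"
    by (simp add: countable_finite finite_cell_states)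
  show "cell_spec w \<Phi> t' c' \<in> cell_states \<Phi>" for t' c'
    by (rule cell_spec_in_cell_states)
  show "cell_spec w \<Phi> t' c' = Edge" if "c' \<notin> {1..length w}" for t' c'
    using that by (simp add: cell_spec_def)
  show "cell_spec w \<Phi> 0 c' = Quiet" if "c' \<in> {1..length w}" for c'
    using that by (simp add: cell_spec_def)
qed (use assms cell_spec_input cell_spec_step in simp_all)

lemma ia_accepts_rt_horn_ia:
  assumes w: "w \<noteq> []"
  shows "ia_accepts_rt (horn_ia \<Phi>) w \<longleftrightarrow> models w \<Phi>"
proof -
  let ?n = "length w"
  have final: "window_val (cell_spec w \<Phi> ?n 1) (False, True, True) = forced w \<Phi> ?n ?n"
    using w by (simp add: cell_spec_def window_def Suc_le_eq)
  have "ia_accepts_rt (horn_ia \<Phi>) w \<longleftrightarrow> accepting \<Phi> (cell_spec w \<Phi> ?n 1)"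
    unfolding horn_ia_def
    by (rule ia_accepts_rt_ia_of)
      (simp_all add: countable_finite finite_cell_states cell_spec_in_cell_states
        conf_horn_ia[unfolded horn_ia_def])
  also have "\<dots> \<longleftrightarrow> models w \<Phi>"
    unfolding accepting_def final using w by (simp add: models_iff_forced forced_model_def)
  finally show ?thesis .
qed

theorem lemma6:
  fixes \<Phi> :: "('a::finite, 'r) formula"
  shows "\<exists>(A :: 'a ia) (Q :: nat set). ia_wf A Q \<and>
           (\<forall>w :: 'a list. w \<noteq> [] \<longrightarrow> (ia_accepts_rt A w \<longleftrightarrow> models w \<Phi>))"
  using horn_ia_wf ia_accepts_rt_horn_ia by blast

end
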